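(* Let $k\ge2$, $q\in\{0,\dots,k-2\}$, $1\le\ell_1,\ell_2\le k-1$ and $\alpha\in\mathfrak{S}_k^0$ be fixed. Then $$\#\big\{\varphi\in\mathfrak{S}_k^0:\ \big|c^{-1}\varphi^{-1}\alpha^{-1}c\,(\ell_2\ k-1)(1\ \ell_1)\,\varphi\big|=q\big\}\le\frac{k^{4q}}{(2q)!}.$$
   Context: $\mathfrak{S}_k$ is the symmetric group on $\{1,\dots,k\}$, products are compositions (applied right to left), and $\mathfrak{S}_k^0:=\{\varphi\in\mathfrak{S}_k:\varphi(1)=1,\ \varphi(k)=k\}$. $c$ is the cycle $(1\,2\,\cdots\,k)$, i.e. $c(i)=i+1$ for $i<k$ and $c(k)=1$. For $x\ne y$, $(x\,y)$ is the transposition exchanging $x,y$; $(x\,x)$ denotes the identity. For $\sigma\in\mathfrak{S}_k$, $|\sigma|$ is the minimal number of transpositions needed to write $\sigma$ as a product of transpositions. *)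

theory Defs
  imports "HOL-Combinatorics.Combinatorics" Complex_Main
begin

text \<open>Permutations of {1..k} are functions nat => nat that permute {1..k}
  (identity outside). Composition is function composition, applied right to left.\<close>

definition Sk0 :: "nat \<Rightarrow> (nat \<Rightarrow> nat) set" where
  "Sk0 k = {\<phi>. \<phi> permutes {1..k} \<and> \<phi> 1 = 1 \<and> \<phi> k = k}"

definition cyc :: "nat \<Rightarrow> nat \<Rightarrow> nat" where
  "cyc k i = (if 1 \<le> i \<and> i < k then i + 1 else if i = k then 1 else i)"

definition transp_prod :: "(nat \<times> nat) list \<Rightarrow> nat \<Rightarrow> nat" where
  "transp_prod ts = foldr (\<lambda>(x, y) f. transpose x y \<circ> f) ts id"

definition tlen :: "nat \<Rightarrow> (nat \<Rightarrow> nat) \<Rightarrow> nat" where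
  "tlen k \<sigma> = (LEAST n. \<exists>ts. length ts = n \<and>
      (\<forall>(x, y) \<in> set ts. x \<in> {1..k} \<and> y \<in> {1..k} \<and> x \<noteq> y) \<and>
      \<sigma> = transp_prod ts)"

end

theory Submission
  imports Defs
begin

text \<open>Put \<open>\<beta> = \<alpha>\<inverse>c(\<ell>\<^sub>2 k-1)(1 \<ell>\<^sub>1)\<close>. A product of \<open>q\<close> transpositions
  moves at most \<open>2q\<close> points, and at every \<open>y < k\<close> fixed by \<open>c\<inverse>\<phi>\<inverse>\<beta>\<phi>\<close> the
  recurrence \<open>\<phi>(y+1) = \<beta>(\<phi>(y))\<close> holds. Since \<open>\<phi>(1) = 1\<close>, \<open>\<phi>\<close> is therefore
  determined by its graph over any \<open>j = min(2q, k-1)\<close> positions containing the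
  failures of the recurrence. This encodes \<open>\<phi>\<close> injectively by a \<open>j\<close>-subset of
  \<open>{1..k}\<^sup>2\<close>, so the count is at most \<open>(k\<^sup>2 choose j) \<le> (k\<^sup>2)\<^sup>j/j! \<le> k\<^sup>4\<^sup>q/(2q)!\<close>,
  the last step because \<open>n\<^sup>j/j!\<close> increases with \<open>j \<le> n\<close>.\<close>

lemma transp_prod_Cons: "transp_prod ((a, b) # ts) = transpose a b \<circ> transp_prod ts"
  by (simp add: transp_prod_def)

lemma card_moved_transp_prod_le:
  "finite {x. transp_prod ts x \<noteq> x} \<and> card {x. transp_prod ts x \<noteq> x} \<le> 2 * length ts"
proof -
  let ?E = "set (concat (map (\<lambda>(a, b). [a, b]) ts))"
  have sub: "{x. transp_prod ts x \<noteq> x} \<subseteq> ?E"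
  proof (induction ts)
    case Nil
    then show ?case by (simp add: transp_prod_def)
  next
    case (Cons p ts)
    obtain a b where p: "p = (a, b)" by force
    show ?case
    proof
      fix x assume "x \<in> {x. transp_prod (p # ts) x \<noteq> x}"
      then have "transpose a b (transp_prod ts x) \<noteq> x" by (simp add: p transp_prod_Cons)
      then show "x \<in> set (concat (map (\<lambda>(a, b). [a, b]) (p # ts)))"
        using Cons.IH by (cases "transp_prod ts x = x") (auto simp: p transpose_def)
    qed
  qed
  have "card ?E \<le> length (concat (map (\<lambda>(a, b). [a, b]) ts))" by (rule card_length)
  also have "\<dots> = 2 * length ts" by (induction ts) auto
  finally show ?thesis
    using card_mono[OF finite_set sub] finite_subset[OF sub finite_set] by simp
qed

lemma permutes_eq_transp_prod:
  assumes "p permutes {1..k}"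
  shows "\<exists>ts. (\<forall>(x, y) \<in> set ts. x \<in> {1..k} \<and> y \<in> {1..k} \<and> x \<noteq> y) \<and> p = transp_prod ts"
  using assms finite_atLeastAtMost
proof (induction rule: permutes_induct)
  case id
  show ?case by (rule exI[of _ "[]"]) (simp add: transp_prod_def)
next
  case (swap a b p)
  then obtain ts where "(\<forall>(x, y) \<in> set ts. x \<in> {1..k} \<and> y \<in> {1..k} \<and> x \<noteq> y)"
    and "p = transp_prod ts" by blast
  with swap show ?case by (intro exI[of _ "(a, b) # ts"]) (auto simp: transp_prod_Cons)
qed

lemma card_moved_le_tlen:
  assumes "p permutes {1..k}"
  shows "finite {x. p x \<noteq> x} \<and> card {x. p x \<noteq> x} \<le> 2 * tlen k p"
proof -
  have "\<exists>ts. length ts = tlen k p \<and>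
      (\<forall>(x, y) \<in> set ts. x \<in> {1..k} \<and> y \<in> {1..k} \<and> x \<noteq> y) \<and> p = transp_prod ts"
    unfolding tlen_def
    by (rule LeastI_ex) (use permutes_eq_transp_prod[OF assms] in blast)
  then obtain ts where "length ts = tlen k p" "p = transp_prod ts" by blast
  then show ?thesis using card_moved_transp_prod_le[of ts] by simp
qed

lemma cyc_permutes:
  assumes "k \<ge> 2"
  shows "cyc k permutes {1..k}"
proof (rule bij_imp_permutes)
  show "bij_betw (cyc k) {1..k} {1..k}"
    using assms
    by (intro bij_betw_byWitness[where f'="\<lambda>i. if i = 1 then k else i - 1"])
       (auto simp: cyc_def)
qed (use assms in \<open>auto simp: cyc_def\<close>)

lemma cyc_eq_Suc: "1 \<le> y \<Longrightarrow> y < k \<Longrightarrow> cyc k y = Suc y"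
  by (simp add: cyc_def)

lemma fixed_point_of_conjugate:
  assumes "surj c" "surj \<phi>" "(inv c \<circ> inv \<phi> \<circ> \<beta> \<circ> \<phi>) y = y"
  shows "\<phi> (c y) = \<beta> (\<phi> y)"
proof -
  have "c (inv c (inv \<phi> (\<beta> (\<phi> y)))) = c y" using assms(3) by simp
  then have "inv \<phi> (\<beta> (\<phi> y)) = c y" by (simp add: surj_f_inv_f[OF assms(1)])
  then show ?thesis by (metis surj_f_inv_f[OF assms(2)])
qed

lemma card_recurrence_defects_le_tlen:
  assumes "k \<ge> 2" "\<phi> permutes {1..k}" "\<beta> permutes {1..k}"
  shows "card {y \<in> {1..<k}. \<phi> (Suc y) \<noteq> \<beta> (\<phi> y)}
           \<le> 2 * tlen k (inv (cyc k) \<circ> inv \<phi> \<circ> \<beta> \<circ> \<phi>)"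
proof -
  let ?\<sigma> = "inv (cyc k) \<circ> inv \<phi> \<circ> \<beta> \<circ> \<phi>"
  have cyc: "cyc k permutes {1..k}" using assms(1) by (rule cyc_permutes)
  then have "?\<sigma> permutes {1..k}"
    using assms(2,3) by (simp add: permutes_compose permutes_inv)
  then have moved: "finite {x. ?\<sigma> x \<noteq> x}" "card {x. ?\<sigma> x \<noteq> x} \<le> 2 * tlen k ?\<sigma>"
    using card_moved_le_tlen by blast+
  have "\<phi> (Suc y) = \<beta> (\<phi> y)" if "1 \<le> y" "y < k" "?\<sigma> y = y" for y
    using fixed_point_of_conjugate[OF permutes_surj[OF cyc] permutes_surj[OF assms(2)] that(3)]
    by (simp add: cyc_eq_Suc[OF that(1,2)])
  then have "{y \<in> {1..<k}. \<phi> (Suc y) \<noteq> \<beta> (\<phi> y)} \<subseteq> {x. ?\<sigma> x \<noteq> x}" by auto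
  with moved show ?thesis by (meson card_mono order.trans)
qed

lemma eq_on_interval_by_recurrence:
  assumes "f 1 = g 1" "\<forall>x \<in> T. f x = g x"
    and "\<And>y. 1 \<le> y \<Longrightarrow> y < k \<Longrightarrow> Suc y \<notin> T \<Longrightarrow> f (Suc y) = \<beta> (f y) \<and> g (Suc y) = \<beta> (g y)"
  shows "1 \<le> y \<Longrightarrow> y \<le> k \<Longrightarrow> f y = g y"
proof (induction y)
  case (Suc y)
  show ?case
  proof (cases "y = 0 \<or> Suc y \<in> T")
    case False
    with Suc show ?thesis using assms(3)[of y] by simp
  qed (use assms(1,2) in auto)
qed simp

lemma card_permutes_few_recurrence_defects:
  assumes "\<And>\<phi>. \<phi> \<in> A \<Longrightarrow> \<phi> permutes {1..k} \<and> \<phi> 1 = 1"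
    and "\<And>\<phi>. \<phi> \<in> A \<Longrightarrow> card {y \<in> {1..<k}. \<phi> (Suc y) \<noteq> \<beta> (\<phi> y)} \<le> m"
  shows "card A \<le> (k * k) choose (min m (k - 1))"
proof -
  define j where "j = min m (k - 1)"
  define defects where "defects \<phi> = {y \<in> {1..<k}. \<phi> (Suc y) \<noteq> \<beta> (\<phi> y)}"
    for \<phi> :: "nat \<Rightarrow> nat"
  have "\<exists>T. Suc ` defects \<phi> \<subseteq> T \<and> T \<subseteq> {2..k} \<and> card T = j" if "\<phi> \<in> A" for \<phi>
  proof (rule exists_subset_between)
    have "card (Suc ` defects \<phi>) = card (defects \<phi>)" by (simp add: card_image)
    moreover have "card (defects \<phi>) \<le> card {1..<k}"
      by (rule card_mono) (auto simp: defects_def)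
    ultimately show "card (Suc ` defects \<phi>) \<le> j"
      using assms(2)[OF that] by (simp add: j_def defects_def)
  qed (auto simp: j_def defects_def)
  then obtain T where T: "\<And>\<phi>. \<phi> \<in> A \<Longrightarrow>
      Suc ` defects \<phi> \<subseteq> T \<phi> \<and> T \<phi> \<subseteq> {2..k} \<and> card (T \<phi>) = j"
    by metis
  define graph where "graph \<phi> = (\<lambda>x. (x, \<phi> x)) ` T \<phi>" for \<phi> :: "nat \<Rightarrow> nat"
  have recurrence: "\<phi> (Suc y) = \<beta> (\<phi> y)"
    if "\<phi> \<in> A" "1 \<le> y" "y < k" "Suc y \<notin> T \<phi>" for \<phi> y
    using T[OF that(1)] that(2-4) by (auto simp: defects_def)
  have "inj_on graph A"
  proof (rule inj_onI)
    fix \<phi> \<psi> assume \<phi>: "\<phi> \<in> A" and \<psi>: "\<psi> \<in> A" and eq: "graph \<phi> = graph \<psi>"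
    have same_T: "T \<phi> = T \<psi>"
      using arg_cong[OF eq, of "(`) fst"] by (simp add: graph_def image_image)
    have on_T: "\<forall>x \<in> T \<phi>. \<phi> x = \<psi> x" using eq by (auto simp: graph_def)
    have agree: "\<phi> y = \<psi> y" if "1 \<le> y" "y \<le> k" for y
    proof (rule eq_on_interval_by_recurrence[where T="T \<phi>" and \<beta>=\<beta> and k=k, OF _ on_T _ that])
      show "\<phi> 1 = \<psi> 1" using assms(1)[OF \<phi>] assms(1)[OF \<psi>] by simp
      show "\<phi> (Suc y) = \<beta> (\<phi> y) \<and> \<psi> (Suc y) = \<beta> (\<psi> y)"
        if "1 \<le> y" "y < k" "Suc y \<notin> T \<phi>" for y
        using recurrence[OF \<phi> that] recurrence[OF \<psi> that(1,2)] that(3) same_T by simp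
    qed
    show "\<phi> = \<psi>"
    proof
      fix y
      show "\<phi> y = \<psi> y"
        using agree assms(1)[OF \<phi>] assms(1)[OF \<psi>]
        by (cases "y \<in> {1..k}") (auto simp: permutes_not_in)
    qed
  qed
  moreover have "graph \<phi> \<in> {P. P \<subseteq> {1..k} \<times> {1..k} \<and> card P = j}" if "\<phi> \<in> A" for \<phi>
  proof -
    have "T \<phi> \<subseteq> {1..k}" using T[OF that] by auto
    then have "graph \<phi> \<subseteq> {1..k} \<times> {1..k}"
      using permutes_in_image assms(1)[OF that] by (fastforce simp: graph_def)
    moreover have "card (graph \<phi>) = j"
      using T[OF that] by (simp add: graph_def card_image inj_on_def)
    ultimately show ?thesis by simp
  qed
  ultimately have "card A \<le> card {P. P \<subseteq> {1..k} \<times> {1..k} \<and> card P = j}"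
    by (intro card_inj_on_le) auto
  also have "\<dots> = (k * k) choose j" by (simp add: n_subsets)
  finally show ?thesis unfolding j_def .
qed

lemma power_div_fact_mono:
  assumes "i \<le> j" "j \<le> n"
  shows "real n ^ i / fact i \<le> real n ^ j / fact j"
  using assms
proof (induction j)
  case (Suc j)
  show ?case
  proof (cases "i = Suc j")
    case False
    with Suc have "real n ^ i / fact i \<le> real n ^ j / fact j" by simp
    also have "\<dots> \<le> real n ^ j / fact j * (real n / real (Suc j))"
      using Suc.prems mult_left_mono[of 1 "real n / real (Suc j)" "real n ^ j / fact j"]
      by simp
    also have "\<dots> = real n ^ Suc j / fact (Suc j)" by (simp add: ac_simps)
    finally show ?thesis .
  qed simp
qed simp

lemma binomial_le_power_div_fact: "real (n choose j) \<le> real n ^ j / fact j"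
  using binomial_fact_pow[of n j]
  by (simp add: field_simps) (metis of_nat_fact of_nat_le_iff of_nat_mult of_nat_power)

theorem lemma6:
  fixes k q l1 l2 :: nat and \<alpha> :: "nat \<Rightarrow> nat"
  assumes "k \<ge> 2" and "q \<le> k - 2"
    and "1 \<le> l1" "l1 \<le> k - 1" and "1 \<le> l2" "l2 \<le> k - 1"
    and "\<alpha> \<in> Sk0 k"
  shows "real (card {\<phi> \<in> Sk0 k.
            tlen k (inv (cyc k) \<circ> inv \<phi> \<circ> inv \<alpha> \<circ> cyc k \<circ> transpose l2 (k - 1)
                    \<circ> transpose 1 l1 \<circ> \<phi>) = q})
         \<le> real k ^ (4 * q) / fact (2 * q)"
proof -
  define \<beta> where "\<beta> = inv \<alpha> \<circ> cyc k \<circ> transpose l2 (k - 1) \<circ> transpose 1 l1"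
  define \<sigma> where "\<sigma> \<phi> = inv (cyc k) \<circ> inv \<phi> \<circ> inv \<alpha> \<circ> cyc k \<circ> transpose l2 (k - 1)
                    \<circ> transpose 1 l1 \<circ> \<phi>" for \<phi> :: "nat \<Rightarrow> nat"
  have \<beta>: "\<beta> permutes {1..k}"
    unfolding \<beta>_def using assms cyc_permutes[OF assms(1)]
    by (intro permutes_compose permutes_swap_id permutes_inv) (auto simp: Sk0_def)
  have \<sigma>: "\<sigma> \<phi> = inv (cyc k) \<circ> inv \<phi> \<circ> \<beta> \<circ> \<phi>" for \<phi>
    by (simp add: \<sigma>_def \<beta>_def comp_assoc)
  have defects: "card {y \<in> {1..<k}. \<phi> (Suc y) \<noteq> \<beta> (\<phi> y)} \<le> 2 * q"
    if "\<phi> \<in> Sk0 k" "tlen k (\<sigma> \<phi>) = q" for \<phi>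
    using card_recurrence_defects_le_tlen[OF assms(1) _ \<beta>, of \<phi>] that
    by (simp add: \<sigma> Sk0_def)
  have "card {\<phi> \<in> Sk0 k. tlen k (\<sigma> \<phi>) = q} \<le> (k * k) choose (min (2 * q) (k - 1))"
    using defects by (intro card_permutes_few_recurrence_defects[where \<beta>=\<beta>]) (auto simp: Sk0_def)
  then have "real (card {\<phi> \<in> Sk0 k. tlen k (\<sigma> \<phi>) = q})
      \<le> real (k * k) ^ min (2 * q) (k - 1) / fact (min (2 * q) (k - 1))"
    using binomial_le_power_div_fact order.trans of_nat_le_iff by blast
  also have "\<dots> \<le> real (k * k) ^ (2 * q) / fact (2 * q)"
    using assms(1,2) by (intro power_div_fact_mono) (auto intro: order.trans[of _ "2 * k"])
  also have "\<dots> = real k ^ (4 * q) / fact (2 * q)"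
    by (simp add: power_mult_distrib flip: power_add)
  finally show ?thesis unfolding \<sigma>_def .
qed

end
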